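(* Let $F$ be an unsatisfiable CNF formula not containing the variables $x$ and $y$, and let $f^x_y(F) = \{x,\ \neg x \vee y\} \cup \{\neg y \vee \delta \mid \delta \in F\}$. Then every minimum-size regular resolution proof of $f^x_y(F)$ contains exactly one resolution step on $x$, and this step can be pushed to the leaf level, i.e., the proof can be transformed, without changing its size, into a regular resolution proof of $f^x_y(F)$ in which the resolution on $x$ is the resolution of the two leaf clauses $x$ and $\neg x \vee y$.
   Context: The resolution rule derives from clauses $\alpha \vee z$ and $\beta \vee \neg z$ the resolvent $\alpha \vee \beta$ (resolving on $z$). A resolution proof of a CNF formula $F$ is a directed acyclic graph whose nodes are clauses, whose leaves are clauses of $F$, in which each internal node is the resolvent of its two parents, and whose root is the empty clause. It is regular if no path from the root to a leaf contains two resolution steps on the same variable. The size of a proof is its number of clauses (nodes); an optimal proof is one of minimum size. *)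

theory Defs
  imports Main
begin

datatype 'v lit = Pos 'v | Neg 'v

type_synonym 'v clause = "'v lit set"

definition cnf :: "'v clause set \<Rightarrow> bool" where
  "cnf F \<longleftrightarrow> finite F \<and> (\<forall>C\<in>F. finite C)"

fun lit_sat :: "('v \<Rightarrow> bool) \<Rightarrow> 'v lit \<Rightarrow> bool" where
  "lit_sat \<sigma> (Pos v) = \<sigma> v"
| "lit_sat \<sigma> (Neg v) = (\<not> \<sigma> v)"

definition satisfiable :: "'v clause set \<Rightarrow> bool" where
  "satisfiable F \<longleftrightarrow> (\<exists>\<sigma>. \<forall>C\<in>F. \<exists>l\<in>C. lit_sat \<sigma> l)"

definition occurs :: "'v \<Rightarrow> 'v clause set \<Rightarrow> bool" where
  "occurs v F \<longleftrightarrow> (\<exists>C\<in>F. Pos v \<in> C \<or> Neg v \<in> C)"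

definition resolvent :: "'v clause \<Rightarrow> 'v clause \<Rightarrow> 'v \<Rightarrow> 'v clause \<Rightarrow> bool" where
  "resolvent C1 C2 z R \<longleftrightarrow> Pos z \<in> C1 \<and> Neg z \<in> C2 \<and>
     R = (C1 - {Pos z}) \<union> (C2 - {Neg z})"

text \<open>A node is a leaf (\<open>inf n = None\<close>) or an internal node
  (\<open>inf n = Some (a, b, z)\<close>): the resolvent of its parents \<open>a\<close>
  (containing \<open>z\<close>) and \<open>b\<close> (containing \<open>\<not>z\<close>) on the variable \<open>z\<close>.\<close>
record 'v rproof =
  nodes :: "nat set"
  lab :: "nat \<Rightarrow> 'v clause"
  inf :: "nat \<Rightarrow> (nat \<times> nat \<times> 'v) option"
  root :: nat

definition edges :: "'v rproof \<Rightarrow> (nat \<times> nat) set" where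
  "edges P = {(a, n). n \<in> nodes P \<and>
      (\<exists>b z. inf P n = Some (a, b, z) \<or> inf P n = Some (b, a, z))}"

definition pivot :: "'v rproof \<Rightarrow> nat \<Rightarrow> 'v option" where
  "pivot P n = (case inf P n of None \<Rightarrow> None | Some (a, b, z) \<Rightarrow> Some z)"

definition res_proof :: "'v clause set \<Rightarrow> 'v rproof \<Rightarrow> bool" where
  "res_proof F P \<longleftrightarrow>
     finite (nodes P) \<and> root P \<in> nodes P \<and> lab P (root P) = {} \<and>
     acyclic (edges P) \<and>
     (\<forall>n\<in>nodes P. (n, root P) \<in> (edges P)\<^sup>*) \<and>
     (\<forall>n\<in>nodes P. case inf P n of
         None \<Rightarrow> lab P n \<in> F
       | Some (a, b, z) \<Rightarrow> a \<in> nodes P \<and> b \<in> nodes P \<and>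
                          resolvent (lab P a) (lab P b) z (lab P n))"

definition regular :: "'v rproof \<Rightarrow> bool" where
  "regular P \<longleftrightarrow> (\<forall>m n z. (m, n) \<in> (edges P)\<^sup>+ \<longrightarrow>
       pivot P m = Some z \<longrightarrow> pivot P n \<noteq> Some z)"

definition reg_proof :: "'v clause set \<Rightarrow> 'v rproof \<Rightarrow> bool" where
  "reg_proof F P \<longleftrightarrow> res_proof F P \<and> regular P"

definition psize :: "'v rproof \<Rightarrow> nat" where
  "psize P = card (nodes P)"

definition min_reg_proof :: "'v clause set \<Rightarrow> 'v rproof \<Rightarrow> bool" where
  "min_reg_proof F P \<longleftrightarrow> reg_proof F P \<and> (\<forall>Q. reg_proof F Q \<longrightarrow> psize P \<le> psize Q)"

definition fxy :: "'v \<Rightarrow> 'v \<Rightarrow> 'v clause set \<Rightarrow> 'v clause set" where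
  "fxy x y F = {{Pos x}, {Neg x, Pos y}} \<union> {insert (Neg y) \<delta> | \<delta>. \<delta> \<in> F}"

end

theory Submission
  imports Defs
begin

text \<open>In \<open>f\<^sup>x\<^sub>y(F)\<close> the literal \<open>x\<close> occurs only in the unit clause \<open>x\<close>, so every
  resolution on \<open>x\<close> has a leaf \<open>x\<close> as positive premise and merely deletes \<open>\<not>x\<close> from its
  negative premise; and \<open>\<not>x\<close> occurs only in \<open>\<not>x \<or> y\<close>. Hence one may delete all resolutions
  on \<open>x\<close>, all leaves \<open>x\<close> and \<open>\<not>x \<or> y\<close>, and \<open>\<not>x\<close> from every clause, and derive \<open>y\<close> once
  from a single pair of leaves \<open>x\<close>, \<open>\<not>x \<or> y\<close>. Every path of the new DAG that starts at a
  surviving node is a path of the old one, and below the new resolution on \<open>x\<close> there are only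
  surviving nodes, which do not resolve on \<open>x\<close>; so the new DAG is regular. It has
  \<open>|P| - |X| - |A| - |B| + 3\<close> nodes, where \<open>X\<close>, \<open>A\<close>, \<open>B\<close> are the sets of resolutions on \<open>x\<close> and
  of the two kinds of leaves. Each of these sets is nonempty (the root is empty, but without a
  resolution on \<open>x\<close> a negative literal would survive), so minimality of \<open>P\<close> forces
  \<open>|X| = |A| = |B| = 1\<close> and equal size.\<close>

lemma pivot_eq_Some_iff: "pivot P n = Some z \<longleftrightarrow> (\<exists>a b. inf P n = Some (a, b, z))"
  unfolding pivot_def by (auto split: option.splits)

lemma inf_Some_edges:
  assumes "n \<in> nodes P" "inf P n = Some (a, b, z)"
  shows "(a, n) \<in> edges P" "(b, n) \<in> edges P"
  using assms unfolding edges_def by auto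

lemma edgesE:
  assumes "(u, n) \<in> edges P"
  obtains a b z where "n \<in> nodes P" "inf P n = Some (a, b, z)" "u = a \<or> u = b"
  using assms unfolding edges_def by auto

locale resolution_proof =
  fixes G :: "'v clause set" and P :: "'v rproof"
  assumes res_proof: "res_proof G P"
begin

lemma finite_nodes: "finite (nodes P)"
  and root_in_nodes: "root P \<in> nodes P"
  and root_label: "lab P (root P) = {}"
  and acyclic_edges: "acyclic (edges P)"
  and reaches_root: "n \<in> nodes P \<Longrightarrow> (n, root P) \<in> (edges P)\<^sup>*"
  using res_proof unfolding res_proof_def by simp_all

lemma node_case:
  "n \<in> nodes P \<Longrightarrow> case inf P n of
       None \<Rightarrow> lab P n \<in> G
     | Some (a, b, z) \<Rightarrow> a \<in> nodes P \<and> b \<in> nodes P \<and> resolvent (lab P a) (lab P b) z (lab P n)"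
  using res_proof unfolding res_proof_def by blast

lemma leaf_label: "n \<in> nodes P \<Longrightarrow> inf P n = None \<Longrightarrow> lab P n \<in> G"
  using node_case[of n] by simp

lemma resolution_node:
  assumes "n \<in> nodes P" "inf P n = Some (a, b, z)"
  shows "a \<in> nodes P" "b \<in> nodes P" "Pos z \<in> lab P a" "Neg z \<in> lab P b"
    "lab P n = (lab P a - {Pos z}) \<union> (lab P b - {Neg z})"
  using node_case[OF assms(1)] assms(2) unfolding resolvent_def by auto

lemma finite_edges: "finite (edges P)"
proof -
  have "edges P \<subseteq> (\<Union>n\<in>nodes P. {(fst (the (inf P n)), n), (fst (snd (the (inf P n))), n)})"
    unfolding edges_def by auto
  then show ?thesis
    by (rule finite_subset) (use finite_nodes in auto)
qed

lemma wf_edges: "wf (edges P)"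
  using finite_acyclic_wf finite_edges acyclic_edges by blast

lemma node_induct [consumes 1, case_names leaf resolution]:
  assumes "n \<in> nodes P"
    and leaf: "\<And>n. n \<in> nodes P \<Longrightarrow> inf P n = None \<Longrightarrow> R n"
    and resolution: "\<And>n a b z. n \<in> nodes P \<Longrightarrow> inf P n = Some (a, b, z) \<Longrightarrow> R a \<Longrightarrow> R b \<Longrightarrow> R n"
  shows "R n"
  using assms(1)
proof (induction n rule: wf_induct_rule[OF wf_edges])
  case (1 n)
  show ?case
  proof (cases "inf P n")
    case None
    then show ?thesis using leaf 1 by blast
  next
    case (Some s)
    then obtain a b z where s: "inf P n = Some (a, b, z)" by (cases s) auto
    note parents = resolution_node[OF "1.prems" s]
    show ?thesis
      using resolution[OF "1.prems" s] "1.IH" inf_Some_edges[OF "1.prems" s] parents(1,2) by blast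
  qed
qed

lemma literal_from_leaf:
  "n \<in> nodes P \<Longrightarrow> l \<in> lab P n \<Longrightarrow> \<exists>m\<in>nodes P. inf P m = None \<and> l \<in> lab P m"
proof (induction n rule: node_induct)
  case (resolution n a b z)
  then show ?case using resolution_node[OF resolution.hyps(1,2)] by auto
qed blast

lemma unit_literal_only_at_leaves:
  assumes unit: "\<And>C. C \<in> G \<Longrightarrow> l \<in> C \<Longrightarrow> C = {l}"
  shows "n \<in> nodes P \<Longrightarrow> l \<in> lab P n \<Longrightarrow> inf P n = None \<and> lab P n = {l}"
proof (induction n rule: node_induct)
  case (leaf n)
  then show ?case using unit leaf_label by blast
next
  case (resolution n a b z)
  note res = resolution_node[OF resolution.hyps(1,2)]
  show ?case
    using resolution.prems resolution.IH res(3-5) by auto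
qed

text \<open>A resolution on \<open>z \<noteq> x\<close> keeps the negative literals of its positive premise, which is not
  the unit \<open>x\<close>; so without a resolution on \<open>x\<close> every label other than \<open>{x}\<close>, including the empty
  root, would contain a negative literal.\<close>
lemma resolves_on_positive_unit:
  assumes negative: "\<And>C. C \<in> G \<Longrightarrow> C \<noteq> {Pos x} \<Longrightarrow> \<exists>v. Neg v \<in> C"
  shows "\<exists>n\<in>nodes P. pivot P n = Some x"
proof (rule ccontr)
  assume no_x: "\<not> ?thesis"
  have "n \<in> nodes P \<Longrightarrow> lab P n \<noteq> {Pos x} \<Longrightarrow> \<exists>v. Neg v \<in> lab P n" for n
  proof (induction n rule: node_induct)
    case (leaf n)
    then show ?case using negative leaf_label by blast
  next
    case (resolution n a b z)
    note res = resolution_node[OF resolution.hyps(1,2)]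
    have "z \<noteq> x" using no_x resolution.hyps(1,2) by (auto simp: pivot_eq_Some_iff)
    then have "lab P a \<noteq> {Pos x}" using res(3) by auto
    then obtain v where "Neg v \<in> lab P a" using resolution.IH(1) by blast
    then show ?case using res(5) by auto
  qed
  then show False using root_in_nodes root_label by auto
qed

end

locale unit_var_proof = resolution_proof G P for G :: "'v clause set" and P :: "'v rproof" +
  fixes x :: 'v and D :: "'v clause"
  assumes pos_x_only_in_unit: "\<And>C. C \<in> G \<Longrightarrow> Pos x \<in> C \<Longrightarrow> C = {Pos x}"
    and neg_x_only_in_D: "\<And>C. C \<in> G \<Longrightarrow> Neg x \<in> C \<Longrightarrow> C = D"
    and neg_x_in_D: "Neg x \<in> D"
begin

definition x_steps :: "nat set" where
  "x_steps = {n \<in> nodes P. pivot P n = Some x}"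

definition unit_leaves :: "nat set" where
  "unit_leaves = {n \<in> nodes P. inf P n = None \<and> lab P n = {Pos x}}"

definition D_leaves :: "nat set" where
  "D_leaves = {n \<in> nodes P. inf P n = None \<and> lab P n = D}"

definition kept :: "nat set" where
  "kept = nodes P - x_steps - unit_leaves - D_leaves"

lemma x_stepsI: "n \<in> nodes P \<Longrightarrow> inf P n = Some (a, b, x) \<Longrightarrow> n \<in> x_steps"
  unfolding x_steps_def by (simp add: pivot_eq_Some_iff)

lemma x_stepsE:
  assumes "n \<in> x_steps"
  obtains a b where "n \<in> nodes P" "inf P n = Some (a, b, x)"
  using assms unfolding x_steps_def by (auto simp: pivot_eq_Some_iff)

lemma x_step_label:
  assumes "n \<in> nodes P" "inf P n = Some (a, b, x)"
  shows "a \<in> unit_leaves" "lab P n = lab P b - {Neg x}"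
proof -
  note res = resolution_node[OF assms]
  have a: "inf P a = None" "lab P a = {Pos x}"
    using unit_literal_only_at_leaves[OF pos_x_only_in_unit res(1,3)] by auto
  then show "a \<in> unit_leaves" using res(1) unfolding unit_leaves_def by simp
  show "lab P n = lab P b - {Neg x}" using res(5) a(2) by simp
qed

lemma x_step_neg_premise:
  assumes "n \<in> nodes P" "inf P n = Some (a, b, x)"
  shows "b \<in> nodes P" "Neg x \<in> lab P b" "b \<notin> unit_leaves" "b \<notin> x_steps"
proof -
  show b: "b \<in> nodes P" "Neg x \<in> lab P b" using resolution_node[OF assms] by simp_all
  then show "b \<notin> unit_leaves" unfolding unit_leaves_def by auto
  show "b \<notin> x_steps"
  proof
    assume "b \<in> x_steps"
    then obtain a' b' where "inf P b = Some (a', b', x)" by (rule x_stepsE)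
    with b show False using x_step_label(2)[of b a' b'] by simp
  qed
qed

lemma kept_leaf_label:
  assumes "n \<in> kept" "inf P n = None"
  shows "lab P n \<in> G" "Neg x \<notin> lab P n"
proof -
  have n: "n \<in> nodes P" "n \<notin> D_leaves" using assms(1) unfolding kept_def by simp_all
  show G: "lab P n \<in> G" using leaf_label[OF n(1) assms(2)] .
  show "Neg x \<notin> lab P n"
    using neg_x_only_in_D[OF G] n assms(2) unfolding D_leaves_def by blast
qed

lemma kept_step:
  assumes "n \<in> kept" "inf P n = Some (a, b, z)"
  shows "n \<in> nodes P" "z \<noteq> x" "a \<in> nodes P" "b \<in> nodes P" "a \<notin> unit_leaves" "b \<notin> unit_leaves"
proof -
  show n: "n \<in> nodes P" using assms(1) unfolding kept_def by simp
  show z: "z \<noteq> x" using assms x_stepsI[OF n] unfolding kept_def by auto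
  show "a \<in> nodes P" "b \<in> nodes P" using resolution_node[OF n assms(2)] by auto
  show "a \<notin> unit_leaves" "b \<notin> unit_leaves"
    using resolution_node[OF n assms(2)] z unfolding unit_leaves_def by auto
qed

lemma D_leaves_nonempty:
  assumes "x_steps \<noteq> {}"
  shows "D_leaves \<noteq> {}"
proof -
  obtain n where "n \<in> x_steps" using assms by blast
  then obtain a b where "n \<in> nodes P" "inf P n = Some (a, b, x)" by (rule x_stepsE)
  note b = x_step_neg_premise(1,2)[OF this]
  obtain m where "m \<in> nodes P" "inf P m = None" "Neg x \<in> lab P m"
    using literal_from_leaf[OF b] by blast
  then have "m \<in> D_leaves"
    using neg_x_only_in_D leaf_label unfolding D_leaves_def by blast
  then show ?thesis by blast
qed

lemma finite_x_steps: "finite x_steps"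
  and finite_unit_leaves: "finite unit_leaves"
  and finite_D_leaves: "finite D_leaves"
  using finite_nodes unfolding x_steps_def unit_leaves_def D_leaves_def by simp_all

end

locale push_x_step = unit_var_proof G P x D
  for G :: "'v clause set" and P :: "'v rproof" and x :: 'v and D :: "'v clause" +
  fixes t a0 b0 :: nat
  assumes regular: "regular P"
    and t_x_step: "t \<in> x_steps" and a0_unit_leaf: "a0 \<in> unit_leaves" and b0_D_leaf: "b0 \<in> D_leaves"
begin

definition neg_parent :: "nat \<Rightarrow> nat" where
  "neg_parent n = fst (snd (the (inf P n)))"

text \<open>A resolution on \<open>x\<close> is bypassed by its negative premise (its positive premise is a unit
  leaf \<open>x\<close>), and every leaf \<open>D\<close> is replaced by the single node \<open>t\<close>, which now derives
  \<open>D - {\<not>x}\<close> from the leaves \<open>a0\<close> and \<open>b0\<close>.\<close>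
definition redirect :: "nat \<Rightarrow> nat" where
  "redirect p = (let q = if p \<in> x_steps then neg_parent p else p in if q \<in> D_leaves then t else q)"

definition pushed :: "'v rproof" where
  "pushed = \<lparr>nodes = kept \<union> {a0, b0, t},
     lab = (\<lambda>n. if n = t then D - {Neg x} else if n = b0 then D else lab P n - {Neg x}),
     inf = (\<lambda>n. if n = t then Some (a0, b0, x)
                else if n \<in> kept then map_option (\<lambda>(a, b, z). (redirect a, redirect b, z)) (inf P n)
                else None),
     root = redirect (root P)\<rparr>"

lemma t_facts: "t \<notin> unit_leaves" "t \<notin> D_leaves" "t \<notin> kept"
proof -
  obtain a b where "inf P t = Some (a, b, x)" using t_x_step by (rule x_stepsE)
  then show "t \<notin> unit_leaves" "t \<notin> D_leaves"
    unfolding unit_leaves_def D_leaves_def by simp_all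
  show "t \<notin> kept" using t_x_step unfolding kept_def by simp
qed

lemma a0_facts: "a0 \<in> nodes P" "inf P a0 = None" "lab P a0 = {Pos x}" "a0 \<notin> kept"
  using a0_unit_leaf unfolding kept_def unit_leaves_def by simp_all

lemma b0_facts: "b0 \<in> nodes P" "inf P b0 = None" "lab P b0 = D" "b0 \<notin> unit_leaves" "b0 \<notin> kept"
  using b0_D_leaf neg_x_in_D unfolding kept_def unit_leaves_def D_leaves_def by auto

lemma distinct_a0_b0_t: "a0 \<noteq> b0" "a0 \<noteq> t" "b0 \<noteq> t"
  using a0_unit_leaf b0_facts(4) t_facts(1,2) b0_D_leaf by auto

lemma nodes_pushed: "nodes pushed = kept \<union> {a0, b0, t}"
  and root_pushed: "root pushed = redirect (root P)"
  and inf_pushed_t: "inf pushed t = Some (a0, b0, x)"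
  and lab_pushed_t: "lab pushed t = D - {Neg x}"
  and lab_pushed_b0: "lab pushed b0 = D"
  unfolding pushed_def using distinct_a0_b0_t by simp_all

lemma inf_pushed_a0: "inf pushed a0 = None"
  and inf_pushed_b0: "inf pushed b0 = None"
  and lab_pushed_a0: "lab pushed a0 = {Pos x}"
  unfolding pushed_def using distinct_a0_b0_t a0_facts b0_facts by auto

lemma inf_pushed_kept:
  "n \<in> kept \<Longrightarrow> inf pushed n = map_option (\<lambda>(a, b, z). (redirect a, redirect b, z)) (inf P n)"
  and lab_pushed_kept: "n \<in> kept \<Longrightarrow> lab pushed n = lab P n - {Neg x}"
  unfolding pushed_def using t_facts b0_facts by auto

lemma inf_pushed_None: "n \<notin> kept \<Longrightarrow> n \<noteq> t \<Longrightarrow> inf pushed n = None"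
  unfolding pushed_def by simp

lemma redirect_kept: "p \<in> kept \<Longrightarrow> redirect p = p"
  unfolding redirect_def kept_def by simp

lemma redirect_b0: "redirect b0 = t"
  using b0_D_leaf b0_facts(2) unfolding redirect_def by (auto elim: x_stepsE)

lemma redirect_x_step:
  assumes "p \<in> nodes P" "inf P p = Some (a, b, x)"
  shows "redirect p = redirect b"
proof -
  have "p \<in> x_steps" "b \<notin> x_steps"
    using x_stepsI[OF assms] x_step_neg_premise(4)[OF assms] by simp_all
  moreover have "neg_parent p = b" using assms(2) unfolding neg_parent_def by simp
  ultimately show ?thesis unfolding redirect_def by simp
qed

lemma redirect_other:
  assumes "p \<in> nodes P" "p \<notin> unit_leaves" "p \<notin> x_steps"
  shows "redirect p \<in> kept \<union> {t}" "lab pushed (redirect p) = lab P p - {Neg x}"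
proof (atomize (full), cases "p \<in> D_leaves")
  case True
  then show "redirect p \<in> kept \<union> {t} \<and> lab pushed (redirect p) = lab P p - {Neg x}"
    using assms(3) lab_pushed_t unfolding redirect_def D_leaves_def by simp
next
  case False
  then have "p \<in> kept" using assms unfolding kept_def by simp
  then show "redirect p \<in> kept \<union> {t} \<and> lab pushed (redirect p) = lab P p - {Neg x}"
    using redirect_kept lab_pushed_kept by simp
qed

lemma redirect_parent:
  assumes "p \<in> nodes P" "p \<notin> unit_leaves"
  shows "redirect p \<in> kept \<union> {t}" "lab pushed (redirect p) = lab P p - {Neg x}"
proof (atomize (full), cases "p \<in> x_steps")
  case True
  then obtain a b where ab: "inf P p = Some (a, b, x)" using x_stepsE by blast
  note b = x_step_neg_premise[OF assms(1) ab]
  show "redirect p \<in> kept \<union> {t} \<and> lab pushed (redirect p) = lab P p - {Neg x}"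
    using redirect_other[OF b(1,3,4)] redirect_x_step[OF assms(1) ab]
      x_step_label(2)[OF assms(1) ab] by simp
next
  case False
  then show "redirect p \<in> kept \<union> {t} \<and> lab pushed (redirect p) = lab P p - {Neg x}"
    using redirect_other[OF assms] by simp
qed

lemma pushed_edge_target: "(u, v) \<in> edges pushed \<Longrightarrow> v \<in> kept \<or> v = t"
  using inf_pushed_None unfolding edges_def by fastforce

lemma pushed_edge_from_t: "(t, v) \<in> edges pushed \<Longrightarrow> v \<in> kept"
  using pushed_edge_target[of t v] inf_pushed_t distinct_a0_b0_t unfolding edges_def by auto

lemma pushed_edgeI:
  assumes "v \<in> kept" "inf P v = Some (a, b, z)"
  shows "(redirect a, v) \<in> edges pushed" "(redirect b, v) \<in> edges pushed"
  using assms inf_pushed_kept[OF assms(1)] unfolding edges_def nodes_pushed by auto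

lemma pushed_edge_from_kept:
  assumes uv: "(u, v) \<in> edges pushed" and u: "u \<in> kept"
  shows "v \<in> kept" "(u, v) \<in> (edges P)\<^sup>+"
proof -
  have "v \<noteq> t" using uv u a0_facts(4) b0_facts(5) inf_pushed_t unfolding edges_def by auto
  then show v: "v \<in> kept" using pushed_edge_target[OF uv] by simp
  obtain a b z p where abz: "inf P v = Some (a, b, z)" and p: "p = a \<or> p = b" "u = redirect p"
    using uv inf_pushed_kept[OF v] unfolding edges_def by auto
  note vP = kept_step(1)[OF v abz]
  have pv: "(p, v) \<in> edges P" using p(1) inf_Some_edges[OF vP abz] by auto
  have p_nodes: "p \<in> nodes P" "p \<notin> unit_leaves" using p(1) kept_step[OF v abz] by auto
  show "(u, v) \<in> (edges P)\<^sup>+"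
  proof (cases "p \<in> x_steps")
    case True
    then obtain a' b' where ab': "inf P p = Some (a', b', x)" by (rule x_stepsE)
    have "b' \<notin> x_steps" using x_step_neg_premise(4)[OF p_nodes(1) ab'] .
    then have "u = b'"
      using p(2) u t_facts(3) redirect_x_step[OF p_nodes(1) ab'] unfolding redirect_def
      by (auto split: if_splits)
    then show ?thesis using pv inf_Some_edges(2)[OF p_nodes(1) ab'] by auto
  next
    case False
    then have "u = p" using p(2) u t_facts(3) unfolding redirect_def by (auto split: if_splits)
    then show ?thesis using pv by auto
  qed
qed

lemma pushed_path_from_kept:
  assumes "(u, v) \<in> (edges pushed)\<^sup>+" "u \<in> kept"
  shows "v \<in> kept \<and> (u, v) \<in> (edges P)\<^sup>+"
  using assms(1)
proof (induction rule: trancl_induct)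
  case (base v)
  then show ?case using pushed_edge_from_kept assms(2) by blast
next
  case (step v w)
  then show ?case using pushed_edge_from_kept[OF step(2)] by (meson trancl_trans)
qed

lemma pushed_path_from_t: "(t, v) \<in> (edges pushed)\<^sup>+ \<Longrightarrow> v \<in> kept"
  by (induction rule: trancl_induct) (auto dest: pushed_edge_from_t pushed_edge_from_kept(1))

lemma pushed_path_target: "(u, v) \<in> (edges pushed)\<^sup>+ \<Longrightarrow> v \<in> kept \<or> v = t"
  by (induction rule: trancl_induct) (auto dest: pushed_edge_target)

lemma acyclic_pushed: "acyclic (edges pushed)"
  unfolding acyclic_def
proof (intro allI notI)
  fix u
  assume cycle: "(u, u) \<in> (edges pushed)\<^sup>+"
  consider "u \<in> kept" | "u = t" using pushed_path_target[OF cycle] by blast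
  then show False
  proof cases
    case 1
    then show False using pushed_path_from_kept[OF cycle] acyclic_edges unfolding acyclic_def by blast
  next
    case 2
    then show False using pushed_path_from_t cycle t_facts(3) by blast
  qed
qed

lemma pivot_pushed_kept: "n \<in> kept \<Longrightarrow> pivot pushed n = pivot P n"
  unfolding pivot_def using inf_pushed_kept by (auto split: option.splits)

lemma pivot_P_kept: "n \<in> kept \<Longrightarrow> pivot P n \<noteq> Some x"
  unfolding kept_def x_steps_def by auto

lemma regular_pushed: "regular pushed"
  unfolding regular_def
proof (intro allI impI)
  fix m n z
  assume path: "(m, n) \<in> (edges pushed)\<^sup>+" and m: "pivot pushed m = Some z"
  have "m \<in> kept \<or> m = t" using m inf_pushed_None unfolding pivot_def by fastforce
  then show "pivot pushed n \<noteq> Some z"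
  proof
    assume "m \<in> kept"
    then show ?thesis
      using pushed_path_from_kept[OF path] m pivot_pushed_kept regular unfolding regular_def by metis
  next
    assume "m = t"
    then have "z = x" "n \<in> kept" using m inf_pushed_t pushed_path_from_t path unfolding pivot_def by auto
    then show ?thesis using pivot_pushed_kept pivot_P_kept by simp
  qed
qed

lemma pushed_path_redirect:
  assumes "(p, r) \<in> (edges P)\<^sup>*" "p \<in> nodes P" "p \<notin> unit_leaves"
  shows "(redirect p, redirect r) \<in> (edges pushed)\<^sup>*"
  using assms
proof (induction rule: converse_rtrancl_induct)
  case base
  then show ?case by simp
next
  case (step p c)
  obtain a b z where c: "c \<in> nodes P" "inf P c = Some (a, b, z)" and p: "p = a \<or> p = b"
    using step.hyps(1) by (rule edgesE)
  have "c \<notin> unit_leaves" using c(2) unfolding unit_leaves_def by simp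
  then have IH: "(redirect c, redirect r) \<in> (edges pushed)\<^sup>*" using step.IH c(1) by blast
  have "(redirect p, redirect c) \<in> (edges pushed)\<^sup>*"
  proof (cases "z = x")
    case True
    then have "p = b" using p step.prems(2) x_step_label(1)[OF c(1)] c(2) by blast
    then show ?thesis using redirect_x_step[OF c(1)] c(2) True by simp
  next
    case False
    then have "c \<in> kept"
      using c x_steps_def unit_leaves_def D_leaves_def unfolding kept_def
      by (auto simp: pivot_eq_Some_iff)
    then show ?thesis using pushed_edgeI[OF _ c(2)] p redirect_kept by fastforce
  qed
  then show ?case using IH by simp
qed

lemma pushed_reaches_root:
  assumes "n \<in> nodes pushed"
  shows "(n, root pushed) \<in> (edges pushed)\<^sup>*"
proof -
  have to_root: "(redirect p, root pushed) \<in> (edges pushed)\<^sup>*" if "p \<in> nodes P" "p \<notin> unit_leaves" for p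
    using pushed_path_redirect[OF reaches_root[OF that(1)] that] unfolding root_pushed .
  have t: "(t, root pushed) \<in> (edges pushed)\<^sup>*"
    using to_root[OF b0_facts(1,4)] redirect_b0 by simp
  have "(a0, t) \<in> edges pushed" "(b0, t) \<in> edges pushed"
    using inf_pushed_t unfolding edges_def nodes_pushed by auto
  moreover have "n \<in> kept \<Longrightarrow> ?thesis"
    using to_root[of n] redirect_kept[of n] unfolding kept_def by auto
  ultimately show ?thesis using assms t unfolding nodes_pushed by auto
qed

lemma pushed_kept_step:
  assumes n: "n \<in> kept" and abz: "inf P n = Some (a, b, z)"
  shows "resolvent (lab pushed (redirect a)) (lab pushed (redirect b)) z (lab pushed n)"
    "redirect a \<in> nodes pushed" "redirect b \<in> nodes pushed"
proof -
  note parents = kept_step[OF n abz]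
  note res = resolution_node[OF parents(1) abz]
  note ra = redirect_parent[OF parents(3,5)] and rb = redirect_parent[OF parents(4,6)]
  show "resolvent (lab pushed (redirect a)) (lab pushed (redirect b)) z (lab pushed n)"
    unfolding resolvent_def ra(2) rb(2) lab_pushed_kept[OF n] res(5)
    using res(3,4) parents(2) by auto
  show "redirect a \<in> nodes pushed" "redirect b \<in> nodes pushed"
    using ra(1) rb(1) unfolding nodes_pushed by auto
qed

lemma pushed_node_case:
  assumes "n \<in> nodes pushed"
  shows "case inf pushed n of
       None \<Rightarrow> lab pushed n \<in> G
     | Some (a, b, z) \<Rightarrow> a \<in> nodes pushed \<and> b \<in> nodes pushed \<and>
                        resolvent (lab pushed a) (lab pushed b) z (lab pushed n)"
proof -
  consider "n \<in> kept" | "n = a0" | "n = b0" | "n = t" using assms unfolding nodes_pushed by auto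
  then show ?thesis
  proof cases
    case 1
    show ?thesis
    proof (cases "inf P n")
      case None
      then show ?thesis
        using kept_leaf_label[OF 1 None] inf_pushed_kept[OF 1] lab_pushed_kept[OF 1] by simp
    next
      case (Some s)
      then obtain a b z where "inf P n = Some (a, b, z)" by (cases s) auto
      then show ?thesis using pushed_kept_step[OF 1] inf_pushed_kept[OF 1] by simp
    qed
  next
    case 2
    then show ?thesis using inf_pushed_a0 lab_pushed_a0 leaf_label[OF a0_facts(1,2)] a0_facts(3) by simp
  next
    case 3
    then show ?thesis using inf_pushed_b0 lab_pushed_b0 leaf_label[OF b0_facts(1,2)] b0_facts(3) by simp
  next
    case 4
    have "resolvent (lab pushed a0) (lab pushed b0) x (lab pushed t)"
      unfolding resolvent_def lab_pushed_a0 lab_pushed_b0 lab_pushed_t using neg_x_in_D by auto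
    then show ?thesis using 4 inf_pushed_t unfolding nodes_pushed by simp
  qed
qed

lemma reg_proof_pushed: "reg_proof G pushed"
  unfolding reg_proof_def res_proof_def
  using finite_nodes redirect_parent[OF root_in_nodes] root_label acyclic_pushed
    pushed_reaches_root pushed_node_case regular_pushed
  by (auto simp: nodes_pushed root_pushed kept_def unit_leaves_def)

lemma card_pushed:
  "card (nodes pushed) + card x_steps + card unit_leaves + card D_leaves = card (nodes P) + 3"
proof -
  let ?removed = "x_steps \<union> unit_leaves \<union> D_leaves"
  have "n \<notin> x_steps" if "inf P n = None" for n
    using that by (auto elim: x_stepsE)
  moreover have "D \<noteq> {Pos x}" using neg_x_in_D by auto
  ultimately have disjoint: "(x_steps \<union> unit_leaves) \<inter> D_leaves = {}" "x_steps \<inter> unit_leaves = {}"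
    unfolding unit_leaves_def D_leaves_def by blast+
  have finite_removed: "finite ?removed"
    using finite_x_steps finite_unit_leaves finite_D_leaves by simp
  have removed: "card ?removed = card x_steps + card unit_leaves + card D_leaves"
    using disjoint finite_x_steps finite_unit_leaves finite_D_leaves by (simp add: card_Un_disjoint)
  have sub: "?removed \<subseteq> nodes P" unfolding x_steps_def unit_leaves_def D_leaves_def by auto
  have "kept = nodes P - ?removed" unfolding kept_def by auto
  then have kept: "card kept + card ?removed = card (nodes P)"
    using card_Diff_subset[OF finite_removed sub] card_mono[OF finite_nodes sub] by simp
  have "kept \<inter> {a0, b0, t} = {}" using a0_facts(4) b0_facts(5) t_facts(3) by auto
  moreover have "card {a0, b0, t} = 3" using distinct_a0_b0_t by simp
  ultimately have "card (nodes pushed) = card kept + 3"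
    using finite_nodes card_Un_disjoint[of kept "{a0, b0, t}"] unfolding nodes_pushed kept_def by simp
  then show ?thesis using removed kept by simp
qed

lemma x_steps_pushed: "{n \<in> nodes pushed. pivot pushed n = Some x} = {t}"
  using inf_pushed_t inf_pushed_a0 inf_pushed_b0 pivot_pushed_kept pivot_P_kept
  unfolding nodes_pushed pivot_def by auto

end

context unit_var_proof
begin

lemma unit_leaves_nonempty: "x_steps \<noteq> {} \<Longrightarrow> unit_leaves \<noteq> {}"
  by (auto elim!: x_stepsE dest: x_step_label(1))

lemma push_x_steps:
  assumes "regular P" "x_steps \<noteq> {}"
  obtains Q t a b where "reg_proof G Q"
    "psize Q + card x_steps + card unit_leaves + card D_leaves = psize P + 3"
    "{n \<in> nodes Q. pivot Q n = Some x} = {t}"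
    "inf Q t = Some (a, b, x)" "inf Q a = None" "inf Q b = None" "lab Q a = {Pos x}" "lab Q b = D"
proof -
  obtain t where t: "t \<in> x_steps" using assms(2) by blast
  then obtain a b where "t \<in> nodes P" "inf P t = Some (a, b, x)" by (rule x_stepsE)
  then have a: "a \<in> unit_leaves" by (rule x_step_label(1))
  obtain b0 where b0: "b0 \<in> D_leaves" using D_leaves_nonempty[OF assms(2)] by blast
  interpret push_x_step G P x D t a b0
    using assms(1) t a b0 by unfold_locales
  show ?thesis
    using that[OF reg_proof_pushed _ x_steps_pushed inf_pushed_t inf_pushed_a0 inf_pushed_b0
        lab_pushed_a0 lab_pushed_b0] card_pushed
    unfolding psize_def by simp
qed

end

lemma fxy_pos_x:
  assumes "x \<noteq> y" "\<not> occurs x F" "C \<in> fxy x y F" "Pos x \<in> C"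
  shows "C = {Pos x}"
  using assms unfolding fxy_def occurs_def by auto

lemma fxy_neg_x:
  assumes "x \<noteq> y" "\<not> occurs x F" "C \<in> fxy x y F" "Neg x \<in> C"
  shows "C = {Neg x, Pos y}"
  using assms unfolding fxy_def occurs_def by auto

lemma fxy_negative_literal: "C \<in> fxy x y F \<Longrightarrow> C \<noteq> {Pos x} \<Longrightarrow> \<exists>v. Neg v \<in> C"
  unfolding fxy_def by auto

theorem lemma8:
  fixes F :: "'v clause set" and x y :: 'v and P :: "'v rproof"
  assumes "cnf F" and "\<not> satisfiable F"
    and "x \<noteq> y" and "\<not> occurs x F" and "\<not> occurs y F"
    and "min_reg_proof (fxy x y F) P"
  shows "card {n \<in> nodes P. pivot P n = Some x} = 1 \<and>
         (\<exists>Q. reg_proof (fxy x y F) Q \<and> psize Q = psize P \<and>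
           card {n \<in> nodes Q. pivot Q n = Some x} = 1 \<and>
           (\<forall>n\<in>nodes Q. pivot Q n = Some x \<longrightarrow>
              (\<exists>a b. inf Q n = Some (a, b, x) \<and> inf Q a = None \<and> inf Q b = None \<and>
                     lab Q a = {Pos x} \<and> lab Q b = {Neg x, Pos y})))"
proof -
  have P: "res_proof (fxy x y F) P" "regular P"
    and minimal: "\<And>Q. reg_proof (fxy x y F) Q \<Longrightarrow> psize P \<le> psize Q"
    using assms(6) unfolding min_reg_proof_def reg_proof_def by auto
  interpret unit_var_proof "fxy x y F" P x "{Neg x, Pos y}"
    using P(1) fxy_pos_x[OF assms(3,4)] fxy_neg_x[OF assms(3,4)] by unfold_locales auto
  have "\<exists>n\<in>nodes P. pivot P n = Some x"
    by (rule resolves_on_positive_unit) (rule fxy_negative_literal)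
  then have x_steps: "x_steps \<noteq> {}" unfolding x_steps_def by blast
  obtain Q t a b where Q: "reg_proof (fxy x y F) Q"
    "psize Q + card x_steps + card unit_leaves + card D_leaves = psize P + 3"
    "{n \<in> nodes Q. pivot Q n = Some x} = {t}"
    "inf Q t = Some (a, b, x)" "inf Q a = None" "inf Q b = None"
    "lab Q a = {Pos x}" "lab Q b = {Neg x, Pos y}"
    by (rule push_x_steps[OF P(2) x_steps])
  have "card x_steps > 0" "card unit_leaves > 0" "card D_leaves > 0"
    using x_steps unit_leaves_nonempty D_leaves_nonempty finite_x_steps finite_unit_leaves
      finite_D_leaves by (simp_all add: card_gt_0_iff)
  then have "card x_steps = 1" "psize Q = psize P"
    using minimal[OF Q(1)] Q(2) by linarith+
  moreover have "\<exists>a b. inf Q n = Some (a, b, x) \<and> inf Q a = None \<and> inf Q b = None \<and>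
      lab Q a = {Pos x} \<and> lab Q b = {Neg x, Pos y}" if "n \<in> nodes Q" "pivot Q n = Some x" for n
  proof -
    have "n = t" using that Q(3) by blast
    then show ?thesis using Q(4-8) by blast
  qed
  ultimately show ?thesis
    using Q(1,3) unfolding x_steps_def by (intro conjI exI[of _ Q]) simp_all
qed

end
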